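(* Define $f:\mathbb N\to\mathbb N$ by $$f(n)=\begin{cases}\lfloor\varphi n\rfloor+1, & n\in R_{0,0},\\ \lfloor(\varphi-1)n\rfloor, & n\in R_{1,0}.\end{cases}$$ Then $f$ is an $R_{i,j}$-permutation of $\mathbb N$ of order $2$ (i.e. $f$ is a bijection of $\mathbb N$, $f\circ f=\mathrm{id}$ and $f\neq\mathrm{id}$). Its first values are $2,1,5,7,3,10,4,13,15,6,\dots$.
   Context: $\mathbb N=\{1,2,\dots\}$, $\varphi=\frac{1+\sqrt5}{2}$. $F$ denotes the Fibonacci numbers ($F(0)=0,F(1)=F(2)=1$). $R_{i,j}$ ($i\in\mathbb Z^{\ge0},j\in\mathbb Z$) is the range of $n\mapsto F(i+1)\lfloor n\varphi\rfloor+F(i)n-j$, $n\in\mathbb N$; thus $R_{0,0}=\{\lfloor n\varphi\rfloor\}$ and $R_{1,0}=\{\lfloor n\varphi^2\rfloor\}$. An $R_{i,j}$-permutation is a permutation $\pi$ of $\mathbb N$ defined piecewise on a finite partition of $\mathbb N$ into sets $R_{i,j}$, with $\pi(n)=\lfloor(a\varphi+b)n+c\rfloor$ for $n$ in a given piece, for integers $a,b,c$ depending on the piece. *)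

theory Defs
  imports Complex_Main "HOL-Number_Theory.Fib"
begin

definition phi :: real where "phi = (1 + sqrt 5) / 2"

definition Rset :: "nat \<Rightarrow> int \<Rightarrow> int set" where
  "Rset i j = {int (fib (i+1)) * \<lfloor>real n * phi\<rfloor> + int (fib i) * int n - j | n::nat. n \<ge> 1}"

definition is_Rperm :: "(nat \<Rightarrow> nat) \<Rightarrow> bool" where
  "is_Rperm p \<longleftrightarrow> bij_betw p {1..} {1..} \<and>
    (\<exists>P :: (nat \<times> int \<times> int \<times> int \<times> int) list.
       (\<forall>k < length P. case P ! k of (i, j, a, b, c) \<Rightarrow> Rset i j \<subseteq> {1..}) \<and>
       (\<forall>n::nat. n \<ge> 1 \<longrightarrow> (\<exists>!k. k < length P \<and>
            (case P ! k of (i, j, a, b, c) \<Rightarrow> int n \<in> Rset i j))) \<and>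
       (\<forall>k < length P. case P ! k of (i, j, a, b, c) \<Rightarrow>
            (\<forall>n::nat. n \<ge> 1 \<longrightarrow> int n \<in> Rset i j \<longrightarrow>
               int (p n) = \<lfloor>(real_of_int a * phi + real_of_int b) * real n + real_of_int c\<rfloor>)))"

text \<open>The map f of the theorem (only meaningful on {1,2,...}; the last branch is never
  used there since Rset 0 0 and Rset 1 0 partition {1,2,...}).\<close>
definition f :: "nat \<Rightarrow> nat" where
  "f n = (if int n \<in> Rset 0 0 then nat (\<lfloor>phi * real n\<rfloor> + 1)
          else if int n \<in> Rset 1 0 then nat \<lfloor>(phi - 1) * real n\<rfloor>
          else n)"

end

theory Submission
  imports Defs
begin

text \<open>
  \<open>Rset 0 0\<close> and \<open>Rset 1 0\<close> are the lower and upper Wythoff sequences \<open>\<lfloor>m\<phi>\<rfloor>\<close> and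
  \<open>\<lfloor>m\<phi>\<^sup>2\<rfloor> = \<lfloor>m\<phi>\<rfloor> + m\<close>, \<open>m \<ge> 1\<close>. Since \<open>\<phi>\<close> is irrational and \<open>1/\<phi> + 1/\<phi>\<^sup>2 = 1\<close>,
  Beatty's theorem says that they partition the positive integers. Writing \<open>\<lfloor>m\<phi>\<rfloor> = m\<phi> - x\<close>
  with \<open>0 < x < 1\<close> and using \<open>\<phi>\<^sup>2 = \<phi> + 1\<close> one finds
  \<open>\<lfloor>\<phi>\<lfloor>m\<phi>\<rfloor>\<rfloor> + 1 = \<lfloor>m\<phi>\<rfloor> + m\<close> and \<open>\<lfloor>(\<phi> - 1)(\<lfloor>m\<phi>\<rfloor> + m)\<rfloor> = \<lfloor>m\<phi>\<rfloor>\<close>, so \<open>f\<close> exchanges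
  the \<open>m\<close>-th lower and the \<open>m\<close>-th upper Wythoff number. Hence \<open>f\<close> is an involution.
\<close>

lemma sqrt_of_nat_in_Rats_imp_square:
  assumes "sqrt (real k) \<in> \<rat>"
  obtains m where "k = m\<^sup>2"
proof -
  obtain m n :: nat where n: "n \<noteq> 0" and sqrt_k: "\<bar>sqrt (real k)\<bar> = real m / real n"
    and "coprime m n"
    using assms by (rule Rats_abs_nat_div_natE)
  from n sqrt_k have "real m = sqrt (real k) * real n"
    by (simp add: field_simps)
  then have "real (m\<^sup>2) = real (k * n\<^sup>2)"
    by (simp add: power_mult_distrib)
  then have sq: "m\<^sup>2 = k * n\<^sup>2"
    by (simp only: of_nat_eq_iff)
  have "coprime (m\<^sup>2) (n\<^sup>2)"
    using \<open>coprime m n\<close> by simp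
  moreover have "n\<^sup>2 dvd m\<^sup>2"
    using sq by simp
  ultimately have "n\<^sup>2 = 1"
    by (simp add: coprime_absorb_right)
  with sq have "k = m\<^sup>2"
    by simp
  then show thesis
    by (rule that)
qed

lemma Rats_mult_irrational:
  fixes x r :: real
  assumes "x \<notin> \<rat>" "r \<in> \<rat>" "r \<noteq> 0"
  shows "r * x \<notin> \<rat>"
proof
  assume "r * x \<in> \<rat>"
  then have "r * x / r \<in> \<rat>"
    using assms(2) by (rule Rats_divide)
  with assms show False
    by simp
qed

lemma Rats_divide_irrational:
  fixes x r :: real
  assumes "x \<notin> \<rat>" "r \<in> \<rat>" "r \<noteq> 0"
  shows "r / x \<notin> \<rat>"
proof -
  have "inverse x \<notin> \<rat>"
    using assms(1) Rats_inverse by force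
  with assms(2,3) show ?thesis
    by (simp add: divide_inverse Rats_mult_irrational)
qed

definition beatty :: "real \<Rightarrow> int set" where
  "beatty \<alpha> = {\<lfloor>real m * \<alpha>\<rfloor> | m::nat. m \<ge> 1}"

lemma mem_beatty_iff_floor_div_less:
  fixes N :: int
  assumes "\<alpha> > 0" "\<alpha> \<notin> \<rat>" "N \<ge> 0"
  shows "N \<in> beatty \<alpha> \<longleftrightarrow> \<lfloor>N / \<alpha>\<rfloor> < \<lfloor>(N + 1) / \<alpha>\<rfloor>"
proof
  assume "N \<in> beatty \<alpha>"
  then obtain m :: nat where "m \<ge> 1" and N: "N = \<lfloor>real m * \<alpha>\<rfloor>"
    unfolding beatty_def by blast
  then have "real m * \<alpha> \<notin> \<rat>"
    using assms(2) by (simp add: Rats_mult_irrational)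
  then have "real m * \<alpha> \<noteq> of_int k" for k
    by auto
  with N have "N < real m * \<alpha>" "real m * \<alpha> < N + 1"
    by (metis floor_correct order_le_less)+
  with assms(1) have "N / \<alpha> < real m" "real m < (N + 1) / \<alpha>"
    by (simp_all add: field_simps)
  then show "\<lfloor>N / \<alpha>\<rfloor> < \<lfloor>(N + 1) / \<alpha>\<rfloor>"
    by (metis floor_less_iff le_floor_iff less_le_trans of_int_of_nat_eq order_less_imp_le)
next
  assume less: "\<lfloor>N / \<alpha>\<rfloor> < \<lfloor>(N + 1) / \<alpha>\<rfloor>"
  define m where "m = \<lfloor>(N + 1) / \<alpha>\<rfloor>"
  have "(N + 1) / \<alpha> \<notin> \<rat>"
    using assms by (intro Rats_divide_irrational) auto
  then have "real_of_int m \<noteq> (N + 1) / \<alpha>"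
    by (metis Rats_of_int)
  then have "m < (N + 1) / \<alpha>"
    using of_int_floor_le[of "(N + 1) / \<alpha>"] unfolding m_def by linarith
  moreover have "N / \<alpha> < m"
    using less unfolding m_def by linarith
  ultimately have "N < m * \<alpha>" "m * \<alpha> < N + 1"
    using assms(1) by (simp_all add: field_simps)
  then have "\<lfloor>m * \<alpha>\<rfloor> = N"
    by (intro floor_unique) simp_all
  moreover have "0 \<le> N / \<alpha>"
    using assms by simp
  with \<open>N / \<alpha> < m\<close> have "0 < m"
    by linarith
  ultimately have "N = \<lfloor>real (nat m) * \<alpha>\<rfloor>" "nat m \<ge> 1"
    by simp_all
  then show "N \<in> beatty \<alpha>"
    unfolding beatty_def by blast
qed

lemma floor_div_add_floor_div:
  fixes N :: int
  assumes "\<alpha> \<notin> \<rat>" "1 / \<alpha> + 1 / \<beta> = 1" "N \<ge> 1"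
  shows "\<lfloor>N / \<alpha>\<rfloor> + \<lfloor>N / \<beta>\<rfloor> = N - 1"
proof -
  have "inverse \<beta> = 1 - inverse \<alpha>"
    unfolding inverse_eq_divide using assms(2) by linarith
  then have "N / \<beta> = N - N / \<alpha>"
    by (simp add: divide_inverse right_diff_distrib)
  moreover have "N / \<alpha> \<notin> \<rat>"
    using assms by (intro Rats_divide_irrational) auto
  then have "N / \<alpha> \<noteq> \<lfloor>N / \<alpha>\<rfloor>"
    by (metis Rats_of_int)
  then have lt: "\<lfloor>N / \<alpha>\<rfloor> < N / \<alpha>" "N / \<alpha> < \<lfloor>N / \<alpha>\<rfloor> + 1"
    using of_int_floor_le[of "N / \<alpha>"] by linarith+
  have "\<lfloor>N - N / \<alpha>\<rfloor> = N - 1 - \<lfloor>N / \<alpha>\<rfloor>"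
    using lt by (intro floor_unique) linarith+
  ultimately show ?thesis
    by simp
qed

text \<open>
  The counting functions \<open>\<lfloor>N/\<alpha>\<rfloor>\<close> and \<open>\<lfloor>N/\<beta>\<rfloor>\<close> sum to \<open>N - 1\<close>, so exactly one of
  them increases from \<open>N\<close> to \<open>N + 1\<close>, and \<open>N\<close> lies in \<open>beatty \<alpha>\<close> iff the first one does.
\<close>

theorem beatty_partition:
  fixes N :: int
  assumes "\<alpha> > 0" "\<beta> > 0" "\<alpha> \<notin> \<rat>" "1 / \<alpha> + 1 / \<beta> = 1" "N \<ge> 1"
  shows "N \<in> beatty \<alpha> \<longleftrightarrow> N \<notin> beatty \<beta>"
proof -
  have "1 / \<alpha> = 1 - 1 / \<beta>"
    using assms(4) by linarith
  moreover have "1 / \<alpha> \<notin> \<rat>"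
    using assms(3) by (intro Rats_divide_irrational) auto
  ultimately have "1 / \<beta> \<notin> \<rat>"
    by (metis Rats_1 Rats_diff)
  then have "\<beta> \<notin> \<rat>"
    by (metis Rats_1 Rats_divide)
  have "\<lfloor>(N + 1) / \<alpha>\<rfloor> + \<lfloor>(N + 1) / \<beta>\<rfloor> = \<lfloor>N / \<alpha>\<rfloor> + \<lfloor>N / \<beta>\<rfloor> + 1"
    using floor_div_add_floor_div[OF assms(3,4) assms(5)] floor_div_add_floor_div[OF assms(3,4), of "N + 1"]
      assms(5) by simp
  moreover have "\<lfloor>N / \<alpha>\<rfloor> \<le> \<lfloor>(N + 1) / \<alpha>\<rfloor>" "\<lfloor>N / \<beta>\<rfloor> \<le> \<lfloor>(N + 1) / \<beta>\<rfloor>"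
    using assms(1,2) by (intro floor_mono divide_right_mono; simp)+
  moreover have "N \<in> beatty \<alpha> \<longleftrightarrow> \<lfloor>N / \<alpha>\<rfloor> < \<lfloor>(N + 1) / \<alpha>\<rfloor>"
    using assms by (intro mem_beatty_iff_floor_div_less) simp_all
  moreover have "N \<in> beatty \<beta> \<longleftrightarrow> \<lfloor>N / \<beta>\<rfloor> < \<lfloor>(N + 1) / \<beta>\<rfloor>"
    using assms \<open>\<beta> \<notin> \<rat>\<close> by (intro mem_beatty_iff_floor_div_less) simp_all
  ultimately show ?thesis
    by linarith
qed

lemma is_Rperm_two_pieces:
  assumes "bij_betw p {1..} {1..}"
    and "Rset i j \<subseteq> {1..}" "Rset i' j' \<subseteq> {1..}"
    and "\<And>n. n \<ge> 1 \<Longrightarrow> int n \<in> Rset i j \<longleftrightarrow> int n \<notin> Rset i' j'"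
    and "\<And>n. n \<ge> 1 \<Longrightarrow> int n \<in> Rset i j \<Longrightarrow>
           int (p n) = \<lfloor>(real_of_int a * phi + real_of_int b) * real n + real_of_int c\<rfloor>"
    and "\<And>n. n \<ge> 1 \<Longrightarrow> int n \<in> Rset i' j' \<Longrightarrow>
           int (p n) = \<lfloor>(real_of_int a' * phi + real_of_int b') * real n + real_of_int c'\<rfloor>"
  shows "is_Rperm p"
proof -
  let ?P = "[(i, j, a, b, c), (i', j', a', b', c')]"
  have pieces: "k < length ?P \<longleftrightarrow> k = 0 \<or> k = 1" for k
    by auto
  have "\<forall>k < length ?P. case ?P ! k of (i, j, a, b, c) \<Rightarrow> Rset i j \<subseteq> {1..}"
    using assms(2,3) unfolding pieces by auto
  moreover have "\<forall>n::nat. n \<ge> 1 \<longrightarrow>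
      (\<exists>!k. k < length ?P \<and> (case ?P ! k of (i, j, a, b, c) \<Rightarrow> int n \<in> Rset i j))"
    using assms(4) unfolding pieces by (metis nth_Cons_0 nth_Cons_Suc One_nat_def case_prod_conv zero_neq_one)
  moreover have "\<forall>k < length ?P. case ?P ! k of (i, j, a, b, c) \<Rightarrow>
      (\<forall>n::nat. n \<ge> 1 \<longrightarrow> int n \<in> Rset i j \<longrightarrow>
         int (p n) = \<lfloor>(real_of_int a * phi + real_of_int b) * real n + real_of_int c\<rfloor>)"
    using assms(5,6) unfolding pieces by auto
  ultimately show ?thesis
    unfolding is_Rperm_def using assms(1) by blast
qed

lemma phi_times_phi: "phi * phi = phi + 1"
  by (simp add: phi_def field_simps)

lemma phi_bounds: "1.61 < phi" "phi < 1.62"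
proof -
  have "sqrt (2.22\<^sup>2) < sqrt 5" "sqrt 5 < sqrt (2.24\<^sup>2)"
    by (simp_all only: real_sqrt_less_iff) (simp_all add: power2_eq_square)
  then have "2.22 < sqrt 5" "sqrt 5 < 2.24"
    by simp_all
  then show "1.61 < phi" "phi < 1.62"
    by (simp_all add: phi_def)
qed

lemma phi_not_rat: "phi \<notin> \<rat>"
proof
  assume "phi \<in> \<rat>"
  moreover have "sqrt (real 5) = 2 * phi - 1"
    by (simp add: phi_def field_simps)
  ultimately have "sqrt (real 5) \<in> \<rat>"
    by simp
  then obtain m :: nat where m: "5 = m\<^sup>2"
    by (rule sqrt_of_nat_in_Rats_imp_square)
  have "m < 3"
  proof (rule ccontr)
    assume "\<not> m < 3"
    then have "3\<^sup>2 \<le> m\<^sup>2"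
      by (intro power_mono) simp_all
    with m show False
      by simp
  qed
  then have "m \<in> {0, 1, 2}"
    by auto
  with m show False
    by auto
qed

lemma floor_mult_phi_ge_1: "m \<ge> 1 \<Longrightarrow> \<lfloor>real m * phi\<rfloor> \<ge> 1"
  using phi_bounds mult_mono[of 1 "real m" 1 phi] by simp

lemma floor_mult_phi_add_one: "\<lfloor>real m * (phi + 1)\<rfloor> = \<lfloor>real m * phi\<rfloor> + int m"
  by (simp add: distrib_left)

lemma Rset_0_0: "Rset 0 0 = beatty phi"
  by (simp add: Rset_def beatty_def)

lemma Rset_1_0: "Rset 1 0 = beatty (phi + 1)"
  by (simp add: Rset_def beatty_def floor_mult_phi_add_one numeral_2_eq_2)

lemma Rset_0_0_iff_not_Rset_1_0:
  assumes "N \<ge> 1"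
  shows "N \<in> Rset 0 0 \<longleftrightarrow> N \<notin> Rset 1 0"
proof -
  have "1 / phi + 1 / (phi + 1) = 1"
    using phi_bounds by (simp add: field_simps phi_times_phi)
  then show ?thesis
    unfolding Rset_0_0 Rset_1_0 using assms phi_bounds phi_not_rat
    by (intro beatty_partition) simp_all
qed

lemma Rset_0_0_subset: "Rset 0 0 \<subseteq> {1..}"
  unfolding Rset_0_0 beatty_def using floor_mult_phi_ge_1 by (auto simp del: one_le_floor)

lemma Rset_1_0_subset: "Rset 1 0 \<subseteq> {1..}"
  unfolding Rset_1_0 beatty_def floor_mult_phi_add_one
  using floor_mult_phi_ge_1 by (force simp del: one_le_floor)

lemma frac_mult_phi_pos: "m \<ge> 1 \<Longrightarrow> 0 < frac (real m * phi)"
  using Rats_mult_irrational[OF phi_not_rat, of "real m"] Ints_subset_Rats by auto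

lemma floor_phi_mult_floor:
  assumes "m \<ge> 1"
  shows "\<lfloor>phi * \<lfloor>real m * phi\<rfloor>\<rfloor> = \<lfloor>real m * phi\<rfloor> + int m - 1"
proof -
  define x where "x = frac (real m * phi)"
  have "phi * \<lfloor>real m * phi\<rfloor> = phi * (real m * phi - x)"
    by (simp add: x_def frac_def)
  also have "\<dots> = real m * (phi * phi) - phi * x"
    by (simp add: algebra_simps)
  also have "\<dots> = \<lfloor>real m * phi\<rfloor> + real m - (phi - 1) * x"
    by (simp add: x_def frac_def algebra_simps phi_times_phi)
  finally have "phi * \<lfloor>real m * phi\<rfloor> = \<lfloor>real m * phi\<rfloor> + real m - (phi - 1) * x" .
  moreover have "0 < x" "x < 1"
    using frac_mult_phi_pos[OF assms] frac_lt_1 unfolding x_def by auto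
  then have "0 < (phi - 1) * x" "(phi - 1) * x < 1"
    using phi_bounds mult_strict_mono[of "phi - 1" 1 x 1] by auto
  ultimately show ?thesis
    by (intro floor_unique) simp_all
qed

lemma floor_phi_minus_one_mult_floor:
  "\<lfloor>(phi - 1) * (\<lfloor>real m * phi\<rfloor> + int m)\<rfloor> = \<lfloor>real m * phi\<rfloor>"
proof -
  define x where "x = frac (real m * phi)"
  have "(phi - 1) * (\<lfloor>real m * phi\<rfloor> + int m) = (phi - 1) * (real m * phi - x + real m)"
    by (simp add: x_def frac_def)
  also have "\<dots> = real m * (phi * phi) - real m - (phi - 1) * x"
    by (simp add: algebra_simps)
  also have "\<dots> = \<lfloor>real m * phi\<rfloor> + (2 - phi) * x"
    by (simp add: x_def frac_def algebra_simps phi_times_phi)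
  finally have "(phi - 1) * (\<lfloor>real m * phi\<rfloor> + int m) = \<lfloor>real m * phi\<rfloor> + (2 - phi) * x" .
  moreover have "0 \<le> x" "x < 1"
    using frac_lt_1 unfolding x_def by auto
  then have "0 \<le> (2 - phi) * x" "(2 - phi) * x < 1"
    using phi_bounds mult_strict_mono[of "2 - phi" 1 x 1] by auto
  ultimately show ?thesis
    by (intro floor_unique) simp_all
qed

lemma f_floor_mult_phi:
  assumes "m \<ge> 1"
  shows "f (nat \<lfloor>real m * phi\<rfloor>) = nat (\<lfloor>real m * phi\<rfloor> + int m)"
proof -
  have pos: "\<lfloor>real m * phi\<rfloor> \<ge> 1"
    using assms by (rule floor_mult_phi_ge_1)
  then have "int (nat \<lfloor>real m * phi\<rfloor>) \<in> Rset 0 0"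
    using assms unfolding Rset_0_0 beatty_def by auto
  with pos show ?thesis
    by (simp add: f_def floor_phi_mult_floor[OF assms])
qed

lemma f_floor_mult_phi_add_one:
  assumes "m \<ge> 1"
  shows "f (nat (\<lfloor>real m * phi\<rfloor> + int m)) = nat \<lfloor>real m * phi\<rfloor>"
proof -
  define N where "N = \<lfloor>real m * phi\<rfloor> + int m"
  have "N \<ge> 1"
    using floor_mult_phi_ge_1[OF assms] unfolding N_def by linarith
  have "N = \<lfloor>real m * (phi + 1)\<rfloor>"
    unfolding N_def floor_mult_phi_add_one ..
  then have "N \<in> Rset 1 0"
    using assms unfolding Rset_1_0 beatty_def by blast
  moreover from this \<open>N \<ge> 1\<close> have "N \<notin> Rset 0 0"
    using Rset_0_0_iff_not_Rset_1_0 by blast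
  moreover have "\<lfloor>(phi - 1) * N\<rfloor> = \<lfloor>real m * phi\<rfloor>"
    unfolding N_def by (rule floor_phi_minus_one_mult_floor)
  ultimately show ?thesis
    using \<open>N \<ge> 1\<close> by (simp add: f_def flip: N_def)
qed

lemma wythoff_cases:
  assumes "n \<ge> 1"
  obtains (lower) m where "m \<ge> 1" "n = nat \<lfloor>real m * phi\<rfloor>"
    | (upper) m where "m \<ge> 1" "n = nat (\<lfloor>real m * phi\<rfloor> + int m)"
proof (cases "int n \<in> Rset 0 0")
  case True
  then show ?thesis
    using lower unfolding Rset_0_0 beatty_def by force
next
  case False
  with assms have "int n \<in> Rset 1 0"
    by (simp add: Rset_0_0_iff_not_Rset_1_0)
  then show ?thesis
    using upper unfolding Rset_1_0 beatty_def floor_mult_phi_add_one by force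
qed

lemma f_f_eq: "n \<ge> 1 \<Longrightarrow> f (f n) = n"
  by (cases n rule: wythoff_cases) (simp_all add: f_floor_mult_phi f_floor_mult_phi_add_one)

lemma f_ge_1:
  assumes "n \<ge> 1"
  shows "f n \<ge> 1"
  using assms
proof (cases rule: wythoff_cases)
  case (lower m)
  then show ?thesis
    using floor_mult_phi_ge_1[of m] by (simp add: f_floor_mult_phi le_nat_iff del: one_le_floor)
next
  case (upper m)
  then show ?thesis
    using floor_mult_phi_ge_1[of m] by (simp add: f_floor_mult_phi_add_one le_nat_iff del: one_le_floor)
qed

lemma is_Rperm_f: "is_Rperm f"
proof (rule is_Rperm_two_pieces[where a = 1 and b = 0 and c = 1 and a' = 1 and b' = "-1" and c' = 0])
  show "bij_betw f {1..} {1..}"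
    by (rule bij_betw_byWitness[where f' = f]) (use f_f_eq f_ge_1 in auto)
  show "int (f n) = \<lfloor>(real_of_int 1 * phi + real_of_int 0) * real n + real_of_int 1\<rfloor>"
    if "int n \<in> Rset 0 0" for n
    using that phi_bounds by (simp add: f_def)
  show "int (f n) = \<lfloor>(real_of_int 1 * phi + real_of_int (- 1)) * real n + real_of_int 0\<rfloor>"
    if "n \<ge> 1" "int n \<in> Rset 1 0" for n
    using that Rset_0_0_iff_not_Rset_1_0[of "int n"] phi_bounds by (simp add: f_def algebra_simps)
qed (use Rset_0_0_subset Rset_1_0_subset Rset_0_0_iff_not_Rset_1_0 in auto)

lemma floor_mult_phi_values:
  "\<lfloor>phi\<rfloor> = 1" "\<lfloor>2 * phi\<rfloor> = 3" "\<lfloor>3 * phi\<rfloor> = 4"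
  "\<lfloor>4 * phi\<rfloor> = 6" "\<lfloor>5 * phi\<rfloor> = 8" "\<lfloor>6 * phi\<rfloor> = 9"
  using phi_bounds by (simp_all add: floor_unique)

lemma f_initial_values: "map f [1..<11] = [2, 1, 5, 7, 3, 10, 4, 13, 15, 6]"
proof -
  have "[1..<11] = [1, 2, 3, 4, 5, 6, 7, 8, 9, 10::nat]"
    by (simp add: upt_rec numeral_eq_Suc)
  then show ?thesis
    using f_floor_mult_phi[of 1] f_floor_mult_phi[of 2] f_floor_mult_phi[of 3]
      f_floor_mult_phi[of 4] f_floor_mult_phi[of 5] f_floor_mult_phi[of 6]
      f_floor_mult_phi_add_one[of 1] f_floor_mult_phi_add_one[of 2]
      f_floor_mult_phi_add_one[of 3] f_floor_mult_phi_add_one[of 4]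
    by (simp only:) (simp add: floor_mult_phi_values)
qed

theorem theorem4p1:
  shows "is_Rperm f \<and> (\<forall>n::nat. n \<ge> 1 \<longrightarrow> f (f n) = n) \<and> (\<exists>n::nat. n \<ge> 1 \<and> f n \<noteq> n) \<and>
         map f [1..<11] = [2, 1, 5, 7, 3, 10, 4, 13, 15, 6]"
proof (intro conjI)
  show "is_Rperm f"
    by (rule is_Rperm_f)
  show "\<forall>n::nat. n \<ge> 1 \<longrightarrow> f (f n) = n"
    using f_f_eq by blast
  show "map f [1..<11] = [2, 1, 5, 7, 3, 10, 4, 13, 15, 6]"
    by (rule f_initial_values)
  show "\<exists>n::nat. n \<ge> 1 \<and> f n \<noteq> n"
    using f_floor_mult_phi[of 1] floor_mult_phi_values(1) by (intro exI[of _ 1]) simp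
qed

end
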